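(* Let $A=(a_{i,j})$ and $B=(b_{i,j})$ be skew-symmetric $n\times n$ matrices over $\mathbb F$. Then the biderivation of $\mathbb F(x_1,\dots,x_n)$ defined by $\{x_i,x_j\}_b=a_{i,j}x_ix_j+b_{i,j}$ satisfies the Jacobi identity (i.e. $B$ is a deformation matrix of $A$) if and only if $b_{i,j}(a_{i,k}+a_{j,k})=0$ for all pairwise distinct $i,j,k\in\{1,\dots,n\}$.
   Context: $\mathbb F\in\{\mathbb R,\mathbb C\}$. A biderivation is a skew-symmetric bilinear map which is a derivation in each argument; it is determined by its values on the generators $x_i$. *)

theory Defs
  imports Complex_Main "HOL-Library.Poly_Mapping" "HOL-Computational_Algebra.Fraction_Field"
begin

text \<open>Multivariate polynomials over a field: finitely supported maps from monomials
(exponent vectors, variable x_i has index i) to coefficients.\<close>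
type_synonym 'a mpoly = "(nat \<Rightarrow>\<^sub>0 nat) \<Rightarrow>\<^sub>0 'a"

type_synonym 'a ratfun = "'a mpoly fract"

definition mvar :: "nat \<Rightarrow> 'a::comm_ring_1 mpoly" where
  "mvar i = Poly_Mapping.single (Poly_Mapping.single i 1) 1"

definition mconst :: "'a::comm_ring_1 \<Rightarrow> 'a mpoly" where
  "mconst c = Poly_Mapping.single 0 c"

definition mvars :: "'a::zero mpoly \<Rightarrow> nat set" where
  "mvars p = \<Union> (Poly_Mapping.keys ` Poly_Mapping.keys p)"

definition mpderiv :: "nat \<Rightarrow> 'a::comm_ring_1 mpoly \<Rightarrow> 'a mpoly" where
  "mpderiv i p = (\<Sum>m\<in>Poly_Mapping.keys p.
      Poly_Mapping.single (m - Poly_Mapping.single i 1)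
        (of_nat (Poly_Mapping.lookup m i) * Poly_Mapping.lookup p m))"

definition rpderiv :: "nat \<Rightarrow> 'a::field ratfun \<Rightarrow> 'a ratfun" where
  "rpderiv i f = (case (SOME (p, q). q \<noteq> 0 \<and> f = Fract p q) of (p, q) \<Rightarrow>
      Fract (mpderiv i p * q - p * mpderiv i q) (q * q))"

definition rvar :: "nat \<Rightarrow> 'a::field ratfun" where
  "rvar i = Fract (mvar i) 1"

definition rconst :: "'a::field \<Rightarrow> 'a ratfun" where
  "rconst c = Fract (mconst c) 1"

text \<open>The field F(x_1,...,x_n) as a subfield of the rational functions.\<close>
definition ratfuns :: "nat \<Rightarrow> 'a::field ratfun set" where
  "ratfuns n = {Fract p q | p q. q \<noteq> 0 \<and> mvars p \<subseteq> {1..n} \<and> mvars q \<subseteq> {1..n}}"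

definition biderivation :: "nat \<Rightarrow> (nat \<Rightarrow> nat \<Rightarrow> 'a::field ratfun) \<Rightarrow> 'a ratfun \<Rightarrow> 'a ratfun \<Rightarrow> 'a ratfun" where
  "biderivation n \<pi> f g = (\<Sum>i\<in>{1..n}. \<Sum>j\<in>{1..n}. rpderiv i f * rpderiv j g * \<pi> i j)"

definition satisfies_jacobi :: "nat \<Rightarrow> ('a::field ratfun \<Rightarrow> 'a ratfun \<Rightarrow> 'a ratfun) \<Rightarrow> bool" where
  "satisfies_jacobi n br \<longleftrightarrow> (\<forall>f\<in>ratfuns n. \<forall>g\<in>ratfuns n. \<forall>h\<in>ratfuns n.
      br f (br g h) + br g (br h f) + br h (br f g) = 0)"

definition skew_symmetric :: "nat \<Rightarrow> (nat \<Rightarrow> nat \<Rightarrow> 'a::ab_group_add) \<Rightarrow> bool" where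
  "skew_symmetric n A \<longleftrightarrow> (\<forall>i\<in>{1..n}. \<forall>j\<in>{1..n}. A i j = - A j i)"

end

theory Submission
  imports Defs "HOL-Computational_Algebra.Polynomial_Factorial"
begin

text \<open>Both the bracket and its Jacobiator are derivations in each argument, so the Jacobi
identity holds on all of F(x_1,...,x_n) as soon as it holds on triples of generators.
For the bracket {x_i, x_j} = a_ij x_i x_j + b_ij the quadratic parts cancel, and for pairwise
distinct i, j, k the Jacobiator of x_i, x_j, x_k is the linear form
b_ij (a_ik + a_jk) x_k + b_ki (a_kj + a_ij) x_j + b_jk (a_ji + a_ki) x_i, which vanishes
exactly when its three coefficients do; triples with a repeated generator contribute nothing.\<close>

subsection \<open>Partial derivatives of polynomials\<close>

lemma mpderiv_eq_sum_over_superset: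
  assumes "finite S" "Poly_Mapping.keys p \<subseteq> S"
  shows "mpderiv i p = (\<Sum>m\<in>S. Poly_Mapping.single (m - Poly_Mapping.single i 1)
           (of_nat (Poly_Mapping.lookup m i) * Poly_Mapping.lookup p m))"
  unfolding mpderiv_def
  by (rule sum.mono_neutral_left) (use assms in \<open>auto simp: in_keys_iff\<close>)

lemma mpderiv_zero [simp]: "mpderiv i 0 = 0"
  by (simp add: mpderiv_def)

lemma mpderiv_add: "mpderiv i (p + q) = mpderiv i p + mpderiv i q"
proof -
  let ?S = "Poly_Mapping.keys p \<union> Poly_Mapping.keys q"
  have "Poly_Mapping.keys (p + q) \<subseteq> ?S" by (rule keys_add)
  then show ?thesis
    by (simp add: mpderiv_eq_sum_over_superset[of ?S] lookup_add distrib_left single_add sum.distrib)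
qed

lemma mpderiv_sum: "finite S \<Longrightarrow> mpderiv i (\<Sum>x\<in>S. f x) = (\<Sum>x\<in>S. mpderiv i (f x))"
  by (induction S rule: finite_induct) (auto simp: mpderiv_add)

lemma mpderiv_single:
  "mpderiv i (Poly_Mapping.single m c) =
     Poly_Mapping.single (m - Poly_Mapping.single i 1) (of_nat (Poly_Mapping.lookup m i) * c)"
  by (subst mpderiv_eq_sum_over_superset[of "{m}"]) auto

lemma mpoly_eq_sum_single:
  "(p :: 'a::comm_ring_1 mpoly) = (\<Sum>m\<in>Poly_Mapping.keys p. Poly_Mapping.single m (Poly_Mapping.lookup p m))"
  by (rule poly_mapping_eqI) (simp add: lookup_sum lookup_single when_def in_keys_iff)

lemma mpderiv_single_mult:
  "mpderiv i (Poly_Mapping.single a c * Poly_Mapping.single b d) =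
     mpderiv i (Poly_Mapping.single a c) * Poly_Mapping.single b d +
     Poly_Mapping.single a c * mpderiv i (Poly_Mapping.single b (d :: 'a::comm_ring_1))"
proof -
  have shift: "Poly_Mapping.single (u - Poly_Mapping.single i 1 + v) (of_nat (Poly_Mapping.lookup u i) * x) =
      Poly_Mapping.single (u + v - Poly_Mapping.single i 1) (of_nat (Poly_Mapping.lookup u i) * x)"
    for u v :: "nat \<Rightarrow>\<^sub>0 nat" and x :: 'a
  proof (cases "Poly_Mapping.lookup u i = 0")
    case False
    then have "u - Poly_Mapping.single i 1 + v = u + v - Poly_Mapping.single i 1"
      by (intro poly_mapping_eqI) (auto simp: lookup_minus lookup_add lookup_single when_def)
    then show ?thesis by simp
  qed simp
  show ?thesis
    using shift[of a b "c * d"] shift[of b a "c * d"]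
    by (simp add: mpderiv_single mult_single lookup_add algebra_simps single_add)
qed

lemma mpderiv_mult: "mpderiv i (p * q) = mpderiv i p * q + p * mpderiv i (q :: 'a::comm_ring_1 mpoly)"
proof -
  have "mpderiv i ((\<Sum>m\<in>S. Poly_Mapping.single m (c m)) * (\<Sum>m\<in>T. Poly_Mapping.single m (d m))) =
      mpderiv i (\<Sum>m\<in>S. Poly_Mapping.single m (c m)) * (\<Sum>m\<in>T. Poly_Mapping.single m (d m)) +
      (\<Sum>m\<in>S. Poly_Mapping.single m (c m)) * mpderiv i (\<Sum>m\<in>T. Poly_Mapping.single m (d m :: 'a))"
    if "finite S" "finite T" for S T c d
    using that
    by (simp add: sum_distrib_left sum_distrib_right mpderiv_sum mpderiv_single_mult sum.distrib)
  from this[of "Poly_Mapping.keys p" "Poly_Mapping.keys q" "Poly_Mapping.lookup p" "Poly_Mapping.lookup q"]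
  show ?thesis by (simp add: mpoly_eq_sum_single[symmetric])
qed

lemma mpderiv_mvar: "mpderiv i (mvar j :: 'a::comm_ring_1 mpoly) = (if i = j then 1 else 0)"
  by (auto simp: mvar_def mpderiv_single lookup_single)

lemma mpderiv_mconst: "mpderiv i (mconst c :: 'a::comm_ring_1 mpoly) = 0"
  by (simp add: mconst_def mpderiv_single)

lemma mpderiv_one: "mpderiv i (1 :: 'a::comm_ring_1 mpoly) = 0"
  using mpderiv_mconst[of i "1::'a"] by (simp add: mconst_def)

text \<open>The quotient rule is independent of the chosen representative, so the choice made by
  \<open>rpderiv\<close> is harmless.\<close>

lemma rpderiv_Fract:
  fixes p q :: "'a::field mpoly"
  assumes q: "q \<noteq> 0"
  shows "rpderiv i (Fract p q) = Fract (mpderiv i p * q - p * mpderiv i q) (q * q)"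
proof -
  let ?P = "\<lambda>(p', q'). q' \<noteq> 0 \<and> Fract p q = Fract p' q'"
  obtain p' q' where chosen: "(SOME x. ?P x) = (p', q')" by (cases "SOME x. ?P x") auto
  have "?P (SOME x. ?P x)" by (rule someI[of ?P "(p, q)"]) (simp add: q)
  then have q': "q' \<noteq> 0" and "Fract p q = Fract p' q'" using chosen by auto
  then have cross: "p * q' = p' * q" using q by (simp add: eq_fract)
  have "mpderiv i p * q' + p * mpderiv i q' = mpderiv i p' * q + p' * mpderiv i q"
    using arg_cong[OF cross, of "mpderiv i"] by (simp add: mpderiv_mult)
  with cross have "(mpderiv i p' * q' - p' * mpderiv i q') * (q * q) =
      (mpderiv i p * q - p * mpderiv i q) * (q' * q')"
    by algebra
  then show ?thesis
    unfolding rpderiv_def using chosen q q' by (simp add: eq_fract)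
qed

lemma rpderiv_add: "rpderiv i (f + g) = rpderiv i f + rpderiv i (g :: 'a::field ratfun)"
  by (cases f, cases g) (simp add: rpderiv_Fract eq_fract mpderiv_add mpderiv_mult algebra_simps)

lemma rpderiv_mult: "rpderiv i (f * g) = f * rpderiv i g + g * rpderiv i (f :: 'a::field ratfun)"
  by (cases f, cases g) (simp add: rpderiv_Fract eq_fract mpderiv_add mpderiv_mult algebra_simps)

lemma rpderiv_zero [simp]: "rpderiv i (0 :: 'a::field ratfun) = 0"
  using rpderiv_add[of i 0 0] by (metis add.right_neutral add_left_cancel)

lemma rpderiv_rvar: "rpderiv i (rvar j :: 'a::field ratfun) = (if i = j then 1 else 0)"
  by (simp add: rvar_def rpderiv_Fract mpderiv_mvar mpderiv_one fract_collapse)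

lemma rpderiv_rconst [simp]: "rpderiv i (rconst c :: 'a::field ratfun) = 0"
  by (simp add: rconst_def rpderiv_Fract mpderiv_mconst mpderiv_one fract_collapse)

lemma rconst_add: "rconst (a + b) = rconst a + (rconst b :: 'a::field ratfun)"
  by (simp add: rconst_def mconst_def single_add)

lemma rconst_mult: "rconst (a * b) = rconst a * (rconst b :: 'a::field ratfun)"
  by (simp add: rconst_def mconst_def mult_single)

lemma rconst_uminus: "rconst (- a) = - (rconst a :: 'a::field ratfun)"
  by (simp add: rconst_def mconst_def single_uminus)

lemma rconst_zero: "rconst 0 = (0 :: 'a::field ratfun)"
  by (simp add: rconst_def mconst_def fract_collapse)

lemma rconst_one: "rconst 1 = (1 :: 'a::field ratfun)"
  by (simp add: rconst_def mconst_def fract_collapse)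

lemma rconst_eq_0_iff: "rconst a = (0 :: 'a::field ratfun) \<longleftrightarrow> a = 0"
proof
  assume "rconst a = (0 :: 'a ratfun)"
  then have "Poly_Mapping.single 0 a = (0 :: 'a mpoly)"
    by (simp add: rconst_def mconst_def Zero_fract_def eq_fract)
  then show "a = 0" by (metis lookup_single_eq lookup_zero)
qed (simp add: rconst_def mconst_def fract_collapse)

lemma ratfun_eq_neg_imp_0:
  assumes "x = - (x :: 'a::field_char_0 ratfun)"
  shows "x = 0"
proof -
  have "rconst 2 * x = 0"
    using assms rconst_add[of "1::'a" 1] by (simp add: rconst_one eq_neg_iff_add_eq_0 algebra_simps)
  moreover have "rconst 2 \<noteq> (0 :: 'a ratfun)" by (simp add: rconst_eq_0_iff)
  ultimately show ?thesis by simp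
qed

subsection \<open>Derivations of F(x_1,...,x_n) are determined by the generators\<close>

lemma rvar_in_ratfuns: "i \<in> {1..n} \<Longrightarrow> rvar i \<in> ratfuns n"
  unfolding ratfuns_def rvar_def
  by (intro CollectI exI[of _ "mvar i"] exI[of _ 1]) (simp add: mvars_def mvar_def)

lemma to_fract_sum: "to_fract (\<Sum>x\<in>S. f x) = (\<Sum>x\<in>S. to_fract (f x))"
  by (induction S rule: infinite_finite_induct) simp_all

lemma to_fract_prod: "to_fract (\<Prod>x\<in>S. f x) = (\<Prod>x\<in>S. to_fract (f x))"
  by (induction S rule: infinite_finite_induct) simp_all

lemma to_fract_power: "to_fract (p ^ k) = to_fract p ^ k"
  by (induction k) simp_all

lemma to_fract_monomial:
  assumes "Poly_Mapping.keys m \<subseteq> {1..n}"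
  shows "to_fract (Poly_Mapping.single m c) = rconst c * (\<Prod>i\<in>{1..n}. rvar i ^ Poly_Mapping.lookup m i)"
proof -
  have mvar_power: "mvar i ^ k = Poly_Mapping.single (Poly_Mapping.single i k) (1 :: 'a)" for i k
    by (induction k) (simp_all add: mvar_def mult_single single_add[symmetric])
  have "(\<Prod>i\<in>{1..n}. Poly_Mapping.single (Poly_Mapping.single i (Poly_Mapping.lookup m i)) (1 :: 'a)) =
      Poly_Mapping.single (\<Sum>i\<in>{1..n}. Poly_Mapping.single i (Poly_Mapping.lookup m i)) 1"
    by (induction rule: finite_induct[OF finite_atLeastAtMost]) (simp_all add: mult_single)
  also have "(\<Sum>i\<in>{1..n}. Poly_Mapping.single i (Poly_Mapping.lookup m i)) = m"
    using assms by (intro poly_mapping_eqI) (auto simp: lookup_sum lookup_single when_def in_keys_iff)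
  finally have "Poly_Mapping.single m c = mconst c * (\<Prod>i\<in>{1..n}. mvar i ^ Poly_Mapping.lookup m i)"
    by (simp add: mvar_power mconst_def mult_single)
  then show ?thesis
    by (simp add: to_fract_prod to_fract_power rconst_def rvar_def to_fract_def[symmetric])
qed

lemma derivation_vanishes_on_ratfuns:
  fixes D :: "'a::field ratfun \<Rightarrow> 'a ratfun"
  assumes add: "\<And>x y. D (x + y) = D x + D y"
    and mult: "\<And>x y. D (x * y) = x * D y + y * D x"
    and rvar: "\<And>i. i \<in> {1..n} \<Longrightarrow> D (rvar i) = 0"
    and rconst: "\<And>c. D (rconst c) = 0"
    and f: "f \<in> ratfuns n"
  shows "D f = 0"
proof -
  have D0: "D 0 = 0" using add[of 0 0] by (metis add.right_neutral add_left_cancel)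
  have D1: "D 1 = 0" using rconst[of 1] by (simp add: rconst_one)
  have D_sum: "(\<And>x. x \<in> S \<Longrightarrow> D (g x) = 0) \<Longrightarrow> D (\<Sum>x\<in>S. g x) = 0" for S g
    by (induction S rule: infinite_finite_induct) (auto simp: D0 add)
  have D_prod: "(\<And>x. x \<in> S \<Longrightarrow> D (g x) = 0) \<Longrightarrow> D (\<Prod>x\<in>S. g x) = 0" for S g
    by (induction S rule: infinite_finite_induct) (auto simp: D1 mult)
  have D_power: "D y = 0 \<Longrightarrow> D (y ^ k) = 0" for y k
    by (induction k) (auto simp: D1 mult)
  have D_poly: "D (to_fract p) = 0" if "mvars p \<subseteq> {1..n}" for p
  proof -
    have "to_fract p = (\<Sum>m\<in>Poly_Mapping.keys p. to_fract (Poly_Mapping.single m (Poly_Mapping.lookup p m)))"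
      by (subst mpoly_eq_sum_single) (rule to_fract_sum)
    moreover have "Poly_Mapping.keys m \<subseteq> {1..n}" if "m \<in> Poly_Mapping.keys p" for m
      using \<open>mvars p \<subseteq> {1..n}\<close> that unfolding mvars_def by auto
    moreover have "D (to_fract (Poly_Mapping.single m c)) = 0" if "Poly_Mapping.keys m \<subseteq> {1..n}" for m c
    proof -
      have "D (\<Prod>i\<in>{1..n}. rvar i ^ Poly_Mapping.lookup m i) = 0" by (intro D_prod D_power rvar)
      then show ?thesis by (simp add: to_fract_monomial[OF that] mult rconst)
    qed
    ultimately show ?thesis by (simp add: D_sum)
  qed
  have D_inverse: "D (inverse y) = 0" if "D y = 0" for y
  proof (cases "y = 0")
    case False
    then have "y * D (inverse y) = 0" using D1 that mult[of y "inverse y"] by simp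
    with False show ?thesis by simp
  qed (simp add: D0)
  from f obtain p q where "f = Fract p q" "q \<noteq> 0" "mvars p \<subseteq> {1..n}" "mvars q \<subseteq> {1..n}"
    unfolding ratfuns_def by blast
  moreover have "Fract p q = to_fract p * inverse (to_fract q)" by (simp add: to_fract_def)
  ultimately show ?thesis by (simp add: mult D_poly D_inverse)
qed

subsection \<open>Skew biderivations and their Jacobiator\<close>

locale skew_biderivation =
  fixes br :: "'a::field ratfun \<Rightarrow> 'a ratfun \<Rightarrow> 'a ratfun"
  assumes add_left: "br (f + g) h = br f h + br g h"
    and mult_left: "br (f * g) h = f * br g h + g * br f h"
    and rconst_left: "br (rconst c) h = 0"
    and skew: "br g f = - br f g"
    and self_eq_0: "br f f = 0"  (* not implied by skew in characteristic 2 *)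
begin

lemma add_right: "br h (f + g) = br h f + br h g"
  using add_left[of f g h] skew[of h "f + g"] skew[of h f] skew[of h g] by simp

lemma mult_right: "br h (f * g) = f * br h g + g * br h f"
  using mult_left[of f g h] skew[of h "f * g"] skew[of h f] skew[of h g] by simp

lemma rconst_right: "br h (rconst c) = 0"
  using skew[of h "rconst c"] rconst_left by simp

lemma zero_right: "br h 0 = 0"
  using add_right[of h 0 0] by (metis add.right_neutral add_left_cancel)

lemma minus_right: "br h (- f) = - br h f"
  using add_right[of h "- f" f] zero_right[of h] by (simp add: eq_neg_iff_add_eq_0)

definition jacobiator :: "'a ratfun \<Rightarrow> 'a ratfun \<Rightarrow> 'a ratfun \<Rightarrow> 'a ratfun" where
  "jacobiator f g h = br f (br g h) + br g (br h f) + br h (br f g)"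

lemma jacobiator_rotate: "jacobiator f g h = jacobiator g h f"
  unfolding jacobiator_def by (simp add: ac_simps)

lemma jacobiator_add_left: "jacobiator (f + f') g h = jacobiator f g h + jacobiator f' g h"
  unfolding jacobiator_def by (simp add: add_left add_right)

text \<open>The second-order terms cancel by skew-symmetry, which makes the Jacobiator a derivation.\<close>

lemma jacobiator_mult_left: "jacobiator (f * f') g h = f * jacobiator f' g h + f' * jacobiator f g h"
  using skew[of g f] skew[of g f']
  unfolding jacobiator_def by (simp add: mult_left mult_right add_right minus_right algebra_simps)

lemma jacobiator_rconst_left: "jacobiator (rconst c) g h = 0"
  unfolding jacobiator_def by (simp add: rconst_left rconst_right zero_right)

lemma jacobiator_repeated: "jacobiator f f h = 0"
  unfolding jacobiator_def using skew[of h f] self_eq_0[of f] by (simp add: minus_right zero_right)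

lemma jacobiator_eq_0_if_repeated:
  assumes "f = g \<or> g = h \<or> h = f"
  shows "jacobiator f g h = 0"
  using assms
proof (elim disjE)
  assume "f = g"
  then show ?thesis by (simp add: jacobiator_repeated)
next
  assume "g = h"
  then show ?thesis using jacobiator_rotate[of f h h] jacobiator_repeated[of h f] by simp
next
  assume "h = f"
  then show ?thesis
    using jacobiator_rotate[of f g f] jacobiator_rotate[of g f f] jacobiator_repeated[of f g] by simp
qed

lemma jacobi_generators_iff_distinct:
  "(\<forall>i\<in>I. \<forall>j\<in>I. \<forall>k\<in>I. jacobiator (rvar i) (rvar j) (rvar k) = 0) \<longleftrightarrow>
   (\<forall>i\<in>I. \<forall>j\<in>I. \<forall>k\<in>I. i \<noteq> j \<and> j \<noteq> k \<and> i \<noteq> k \<longrightarrow> jacobiator (rvar i) (rvar j) (rvar k) = 0)"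
proof (intro iffI ballI impI)
  fix i j k assume distinct: "\<forall>i\<in>I. \<forall>j\<in>I. \<forall>k\<in>I. i \<noteq> j \<and> j \<noteq> k \<and> i \<noteq> k \<longrightarrow>
      jacobiator (rvar i) (rvar j) (rvar k) = 0" and "i \<in> I" "j \<in> I" "k \<in> I"
  show "jacobiator (rvar i) (rvar j) (rvar k) = 0"
  proof (cases "i \<noteq> j \<and> j \<noteq> k \<and> i \<noteq> k")
    case True
    with distinct \<open>i \<in> I\<close> \<open>j \<in> I\<close> \<open>k \<in> I\<close> show ?thesis by blast
  next
    case False
    then have "rvar i = rvar j \<or> rvar j = rvar k \<or> rvar k = rvar i" by blast
    then show ?thesis by (rule jacobiator_eq_0_if_repeated)
  qed
qed simp

lemma jacobiator_vanishes_on_ratfuns: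
  assumes "\<And>i. i \<in> {1..n} \<Longrightarrow> jacobiator (rvar i) g h = 0" and "f \<in> ratfuns n"
  shows "jacobiator f g h = 0"
  by (rule derivation_vanishes_on_ratfuns[where D = "\<lambda>f. jacobiator f g h", OF _ _ assms(1) _ assms(2)])
     (simp_all add: jacobiator_add_left jacobiator_mult_left jacobiator_rconst_left)

lemma satisfies_jacobi_iff_generators:
  "satisfies_jacobi n br \<longleftrightarrow>
   (\<forall>i\<in>{1..n}. \<forall>j\<in>{1..n}. \<forall>k\<in>{1..n}. jacobiator (rvar i) (rvar j) (rvar k) = 0)"
  (is "_ \<longleftrightarrow> ?generators")
proof
  assume "satisfies_jacobi n br"
  then have "\<forall>f\<in>ratfuns n. \<forall>g\<in>ratfuns n. \<forall>h\<in>ratfuns n. jacobiator f g h = 0"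
    unfolding satisfies_jacobi_def jacobiator_def .
  then show ?generators by (simp add: rvar_in_ratfuns)
next
  assume gen: ?generators
  have one: "jacobiator (rvar i) (rvar j) h = 0" if "i \<in> {1..n}" "j \<in> {1..n}" "h \<in> ratfuns n" for i j h
  proof -
    have "jacobiator h (rvar i) (rvar j) = 0"
      by (rule jacobiator_vanishes_on_ratfuns[OF _ that(3)]) (use gen that in blast)
    then show ?thesis using jacobiator_rotate[of h "rvar i" "rvar j"] by simp
  qed
  have two: "jacobiator (rvar i) g h = 0" if i: "i \<in> {1..n}" and "g \<in> ratfuns n" "h \<in> ratfuns n" for i g h
  proof -
    have "jacobiator (rvar l) h (rvar i) = 0" if "l \<in> {1..n}" for l
      using one[OF i that \<open>h \<in> ratfuns n\<close>] jacobiator_rotate[of "rvar l" h "rvar i"]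
        jacobiator_rotate[of h "rvar i" "rvar l"] by simp
    then have "jacobiator g h (rvar i) = 0"
      using \<open>g \<in> ratfuns n\<close> by (rule jacobiator_vanishes_on_ratfuns)
    then show ?thesis
      using jacobiator_rotate[of g h "rvar i"] jacobiator_rotate[of h "rvar i" g] by simp
  qed
  show "satisfies_jacobi n br"
    unfolding satisfies_jacobi_def jacobiator_def[symmetric]
  proof (intro ballI)
    fix f g h :: "'a ratfun" assume "f \<in> ratfuns n" "g \<in> ratfuns n" "h \<in> ratfuns n"
    then show "jacobiator f g h = 0"
      using two by (intro jacobiator_vanishes_on_ratfuns[of n g h f]) auto
  qed
qed

end

lemma biderivation_swap:
  assumes "\<And>i j. i \<in> {1..n} \<Longrightarrow> j \<in> {1..n} \<Longrightarrow> \<pi> j i = - \<pi> i j"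
  shows "biderivation n \<pi> g f = - biderivation n \<pi> f g"
proof -
  have "biderivation n \<pi> g f = (\<Sum>i\<in>{1..n}. \<Sum>j\<in>{1..n}. rpderiv j g * rpderiv i f * \<pi> j i)"
    unfolding biderivation_def by (rule sum.swap)
  also have "\<dots> = (\<Sum>i\<in>{1..n}. \<Sum>j\<in>{1..n}. - (rpderiv i f * rpderiv j g * \<pi> i j))"
  proof (intro sum.cong refl)
    fix i j assume "i \<in> {1..n}" "j \<in> {1..n}"
    then show "rpderiv j g * rpderiv i f * \<pi> j i = - (rpderiv i f * rpderiv j g * \<pi> i j)"
      using assms[of i j] by simp
  qed
  finally show ?thesis unfolding biderivation_def by (simp add: sum_negf)
qed

lemma skew_biderivation_biderivation:
  assumes "\<And>i j. i \<in> {1..n} \<Longrightarrow> j \<in> {1..n} \<Longrightarrow> \<pi> j i = - \<pi> i j"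
  shows "skew_biderivation (biderivation n (\<pi> :: nat \<Rightarrow> nat \<Rightarrow> 'a::field_char_0 ratfun))"
proof
  fix f g h :: "'a ratfun" and c
  show "biderivation n \<pi> (f + g) h = biderivation n \<pi> f h + biderivation n \<pi> g h"
    unfolding biderivation_def by (simp add: rpderiv_add distrib_right sum.distrib)
  show "biderivation n \<pi> (f * g) h = f * biderivation n \<pi> g h + g * biderivation n \<pi> f h"
    unfolding biderivation_def
    by (simp add: rpderiv_mult distrib_right sum.distrib sum_distrib_left algebra_simps)
  show "biderivation n \<pi> (rconst c) h = 0"
    unfolding biderivation_def by simp
  show "biderivation n \<pi> g f = - biderivation n \<pi> f g"
    using assms by (rule biderivation_swap)
  show "biderivation n \<pi> f f = 0"
    by (rule ratfun_eq_neg_imp_0, rule biderivation_swap[OF assms])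
qed

lemma biderivation_rvar_left:
  assumes "i \<in> {1..n}"
  shows "biderivation n \<pi> (rvar i) f = (\<Sum>j\<in>{1..n}. rpderiv j f * \<pi> i j)"
proof -
  have "(\<Sum>j\<in>{1..n}. rpderiv a (rvar i) * rpderiv j f * \<pi> a j) =
      (if a = i then \<Sum>j\<in>{1..n}. rpderiv j f * \<pi> i j else 0)" for a
    by (simp add: rpderiv_rvar)
  then show ?thesis using assms by (simp add: biderivation_def)
qed

lemma biderivation_rvar_rvar:
  assumes "i \<in> {1..n}" "j \<in> {1..n}"
  shows "biderivation n \<pi> (rvar i) (rvar j) = \<pi> i j"
proof -
  have "rpderiv l (rvar j) * \<pi> i l = (if l = j then \<pi> i j else 0)" for l
    by (simp add: rpderiv_rvar)
  then show ?thesis using assms by (simp add: biderivation_rvar_left)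
qed

subsection \<open>The deformed log-canonical bracket\<close>

definition deformed_log_canonical ::
    "(nat \<Rightarrow> nat \<Rightarrow> 'a) \<Rightarrow> (nat \<Rightarrow> nat \<Rightarrow> 'a) \<Rightarrow> nat \<Rightarrow> nat \<Rightarrow> 'a::field ratfun" where
  "deformed_log_canonical A B i j = rconst (A i j) * rvar i * rvar j + rconst (B i j)"

lemma deformed_log_canonical_swap:
  assumes "skew_symmetric n A" "skew_symmetric n B" "i \<in> {1..n}" "j \<in> {1..n}"
  shows "deformed_log_canonical A B j i = - deformed_log_canonical A B i j"
proof -
  have "A j i = - A i j" "B j i = - B i j"
    using assms unfolding skew_symmetric_def by blast+
  then show ?thesis
    unfolding deformed_log_canonical_def by (simp add: rconst_uminus algebra_simps)
qed

lemma biderivation_rvar_deformed_log_canonical: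
  fixes A B :: "nat \<Rightarrow> nat \<Rightarrow> 'a::field"
  defines "\<pi> \<equiv> deformed_log_canonical A B"
  assumes "i \<in> {1..n}" "j \<in> {1..n}" "k \<in> {1..n}"
  shows "biderivation n \<pi> (rvar i) (\<pi> j k) = rconst (A j k) * (rvar k * \<pi> i j + rvar j * \<pi> i k)"
proof -
  have "rpderiv l (\<pi> j k) * \<pi> i l =
      (if l = j then rconst (A j k) * rvar k * \<pi> i j else 0) +
      (if l = k then rconst (A j k) * rvar j * \<pi> i k else 0)" for l
    unfolding \<pi>_def deformed_log_canonical_def
    by (simp add: rpderiv_add rpderiv_mult rpderiv_rvar algebra_simps)
  then show ?thesis
    using assms by (simp add: biderivation_rvar_left sum.distrib algebra_simps)
qed

context
  fixes A B :: "nat \<Rightarrow> nat \<Rightarrow> 'a::field_char_0" and n :: nat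
  assumes skew_A: "skew_symmetric n A" and skew_B: "skew_symmetric n B"
begin

lemma skew_biderivation_deformed_log_canonical:
  "skew_biderivation (biderivation n (deformed_log_canonical A B))"
  using deformed_log_canonical_swap[OF skew_A skew_B] by (rule skew_biderivation_biderivation)

interpretation skew_biderivation "biderivation n (deformed_log_canonical A B)"
  by (rule skew_biderivation_deformed_log_canonical)

lemma jacobiator_deformed_log_canonical:
  assumes i: "i \<in> {1..n}" and j: "j \<in> {1..n}" and k: "k \<in> {1..n}"
  shows "jacobiator (rvar i) (rvar j) (rvar k) =
      rvar k * rconst (B i j * (A i k + A j k)) + rvar j * rconst (B k i * (A k j + A i j)) +
      rvar i * rconst (B j k * (A j i + A k i))"
proof -
  let ?\<pi> = "deformed_log_canonical A B"
  note skew_A' = skew_A[unfolded skew_symmetric_def, rule_format]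
  note skew_B' = skew_B[unfolded skew_symmetric_def, rule_format]
  note skew = skew_A'[OF j i] skew_A'[OF k j] skew_A'[OF i k] skew_B'[OF j i] skew_B'[OF k j] skew_B'[OF i k]
  have "jacobiator (rvar i) (rvar j) (rvar k) =
      rconst (A j k) * (rvar k * ?\<pi> i j + rvar j * ?\<pi> i k) +
      rconst (A k i) * (rvar i * ?\<pi> j k + rvar k * ?\<pi> j i) +
      rconst (A i j) * (rvar j * ?\<pi> k i + rvar i * ?\<pi> k j)"
    unfolding jacobiator_def
    by (simp only: biderivation_rvar_rvar[OF i j] biderivation_rvar_rvar[OF j k]
        biderivation_rvar_rvar[OF k i] biderivation_rvar_deformed_log_canonical[OF i j k]
        biderivation_rvar_deformed_log_canonical[OF j k i] biderivation_rvar_deformed_log_canonical[OF k i j])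
  also have "\<dots> =
      rvar k * rconst (B i j * (A i k + A j k)) + rvar j * rconst (B k i * (A k j + A i j)) +
      rvar i * rconst (B j k * (A j i + A k i))"
    unfolding deformed_log_canonical_def skew rconst_mult rconst_add rconst_uminus by algebra
  finally show ?thesis .
qed

text \<open>The coefficients are recovered by differentiating along x_k, x_j and x_i.\<close>

lemma jacobiator_deformed_log_canonical_eq_0_iff:
  assumes "i \<in> {1..n}" "j \<in> {1..n}" "k \<in> {1..n}" and "i \<noteq> j" "j \<noteq> k" "i \<noteq> k"
  shows "jacobiator (rvar i) (rvar j) (rvar k) = 0 \<longleftrightarrow>
      B i j * (A i k + A j k) = 0 \<and> B k i * (A k j + A i j) = 0 \<and> B j k * (A j i + A k i) = 0"
proof
  assume jacobi: "jacobiator (rvar i) (rvar j) (rvar k) = 0"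
  have "rconst (B i j * (A i k + A j k)) = rpderiv k (jacobiator (rvar i) (rvar j) (rvar k))"
    "rconst (B k i * (A k j + A i j)) = rpderiv j (jacobiator (rvar i) (rvar j) (rvar k))"
    "rconst (B j k * (A j i + A k i)) = rpderiv i (jacobiator (rvar i) (rvar j) (rvar k))"
    unfolding jacobiator_deformed_log_canonical[OF assms(1-3)] using assms(4-6)
    by (simp_all add: rpderiv_add rpderiv_mult rpderiv_rvar)
  then show "B i j * (A i k + A j k) = 0 \<and> B k i * (A k j + A i j) = 0 \<and> B j k * (A j i + A k i) = 0"
    unfolding jacobi by (simp add: rconst_eq_0_iff)
next
  assume "B i j * (A i k + A j k) = 0 \<and> B k i * (A k j + A i j) = 0 \<and> B j k * (A j i + A k i) = 0"
  then have "B i j * (A i k + A j k) = 0" "B k i * (A k j + A i j) = 0" "B j k * (A j i + A k i) = 0"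
    by blast+
  then show "jacobiator (rvar i) (rvar j) (rvar k) = 0"
    unfolding jacobiator_deformed_log_canonical[OF assms(1-3)] by (simp only: rconst_zero) simp
qed

lemma jacobi_distinct_generators_deformed_log_canonical_iff:
  "(\<forall>i\<in>{1..n}. \<forall>j\<in>{1..n}. \<forall>k\<in>{1..n}. i \<noteq> j \<and> j \<noteq> k \<and> i \<noteq> k \<longrightarrow>
      jacobiator (rvar i) (rvar j) (rvar k) = 0) \<longleftrightarrow>
   (\<forall>i\<in>{1..n}. \<forall>j\<in>{1..n}. \<forall>k\<in>{1..n}. i \<noteq> j \<and> j \<noteq> k \<and> i \<noteq> k \<longrightarrow>
      B i j * (A i k + A j k) = 0)"
  (is "?jacobi \<longleftrightarrow> ?coefficients")
proof
  assume jacobi: ?jacobi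
  show ?coefficients
  proof (intro ballI impI)
    fix i j k assume ijk: "i \<in> {1..n}" "j \<in> {1..n}" "k \<in> {1..n}" and distinct: "i \<noteq> j \<and> j \<noteq> k \<and> i \<noteq> k"
    with jacobi have "jacobiator (rvar i) (rvar j) (rvar k) = 0" by blast
    with distinct show "B i j * (A i k + A j k) = 0"
      by (simp add: jacobiator_deformed_log_canonical_eq_0_iff[OF ijk])
  qed
next
  assume coefficients: ?coefficients
  show ?jacobi
  proof (intro ballI impI)
    fix i j k assume ijk: "i \<in> {1..n}" "j \<in> {1..n}" "k \<in> {1..n}" and distinct: "i \<noteq> j \<and> j \<noteq> k \<and> i \<noteq> k"
    then have "k \<noteq> i \<and> i \<noteq> j \<and> k \<noteq> j" "j \<noteq> k \<and> k \<noteq> i \<and> j \<noteq> i" by blast+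
    with coefficients ijk distinct show "jacobiator (rvar i) (rvar j) (rvar k) = 0"
      by (simp add: jacobiator_deformed_log_canonical_eq_0_iff[OF ijk])
  qed
qed

end

theorem proposition5p2:
  fixes A B :: "nat \<Rightarrow> nat \<Rightarrow> 'a::real_normed_field"
    and n :: nat
  assumes "skew_symmetric n A" and "skew_symmetric n B"
  shows "satisfies_jacobi n (biderivation n
            (\<lambda>i j. rconst (A i j) * rvar i * rvar j + rconst (B i j)))
         \<longleftrightarrow> (\<forall>i\<in>{1..n}. \<forall>j\<in>{1..n}. \<forall>k\<in>{1..n}.
               i \<noteq> j \<and> j \<noteq> k \<and> i \<noteq> k \<longrightarrow> B i j * (A i k + A j k) = 0)"
proof -
  interpret skew_biderivation "biderivation n (deformed_log_canonical A B)"
    using assms by (rule skew_biderivation_deformed_log_canonical)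
  have bracket: "(\<lambda>i j. rconst (A i j) * rvar i * rvar j + rconst (B i j)) = deformed_log_canonical A B"
    by (simp add: fun_eq_iff deformed_log_canonical_def)
  have "satisfies_jacobi n (biderivation n (deformed_log_canonical A B)) \<longleftrightarrow>
      (\<forall>i\<in>{1..n}. \<forall>j\<in>{1..n}. \<forall>k\<in>{1..n}. jacobiator (rvar i) (rvar j) (rvar k) = 0)"
    by (rule satisfies_jacobi_iff_generators)
  also have "\<dots> \<longleftrightarrow> (\<forall>i\<in>{1..n}. \<forall>j\<in>{1..n}. \<forall>k\<in>{1..n}. i \<noteq> j \<and> j \<noteq> k \<and> i \<noteq> k \<longrightarrow>
      jacobiator (rvar i) (rvar j) (rvar k) = 0)"
    by (rule jacobi_generators_iff_distinct)
  also have "\<dots> \<longleftrightarrow> (\<forall>i\<in>{1..n}. \<forall>j\<in>{1..n}. \<forall>k\<in>{1..n}.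
      i \<noteq> j \<and> j \<noteq> k \<and> i \<noteq> k \<longrightarrow> B i j * (A i k + A j k) = 0)"
    by (rule jacobi_distinct_generators_deformed_log_canonical_iff[OF assms])
  finally show ?thesis unfolding bracket .
qed

end
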